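(* Let $b\colon\mathbb T^2\to\mathbb R^2$ be a bounded Borel vector field and let $T>0$. Let $\gamma_1\colon[0,T/2]\to\mathbb T^2$ and $\gamma_2\colon[0,T]\to\mathbb T^2$ be Lipschitz functions such that $\gamma_1'(t)=b(\gamma_1(t))$ for a.e. $t\in[0,T/2]$ and $\gamma_2'(t)=b(\gamma_2(t))$ for a.e. $t\in[0,T]$. Assume that $\gamma_1$ is injective and that $\gamma_2([0,T])\subset\gamma_1([0,T/2])$. Then $$\mathscr L^1\big(\{t\in[0,T]:\ \gamma_2'(t)=0\}\big)\ge\frac T2.$$
   Context: $\mathbb T^2=\mathbb R^2/\mathbb Z^2$; $\mathscr L^1$ is one-dimensional Lebesgue measure. *)

theory Defs
  imports "HOL-Analysis.Analysis"
begin

text \<open>The lattice Z^2 inside R^2; the torus T^2 = R^2/Z^2 is modelled by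
  Z^2-periodic functions on R^2 and by lifts of curves to R^2.\<close>
definition int_lattice :: "(real^2) set" where
  "int_lattice = {x. \<forall>i. x $ i \<in> \<int>}"

definition torus_periodic :: "(real^2 \<Rightarrow> 'b) \<Rightarrow> bool" where
  "torus_periodic f \<longleftrightarrow> (\<forall>x k. k \<in> int_lattice \<longrightarrow> f (x + k) = f x)"

end

theory Submission
  imports Defs
begin

text \<open>Lifting to \<real>^2, injectivity of \<gamma>1 modulo \<int>^2 gives \<gamma>2 = \<gamma>1 \<circ> \<sigma> + k with
  \<sigma> : [0,T] \<rightarrow> [0,T/2] continuous (closed graph) and k a fixed lattice vector. At almost every
  time t at which \<gamma>2 moves, either \<gamma>1 moves at \<sigma> t with the same velocity, and then \<sigma> has
  derivative 1 at t, or \<sigma> t lies in the null set where the equation for \<gamma>1 fails; the latter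
  happens only for a null set of times, since \<sigma> is locally inversely Lipschitz there. Moreover \<sigma>
  is non-decreasing: an injective Lipschitz curve cannot be stationary almost everywhere on a
  parameter interval. So \<sigma> is injective on the moving times, and the change of variables
  formula bounds their measure by T/2. The remaining times, of measure at least T/2, are
  stationary.\<close>

lemma negligible_image_locally_lipschitz_real:
  fixes h :: "real \<Rightarrow> real"
  assumes "negligible S"
    and "\<And>x. x \<in> S \<Longrightarrow> \<exists>d>0. \<exists>B. \<forall>y\<in>S. \<bar>y - x\<bar> < d \<longrightarrow> \<bar>h y - h x\<bar> \<le> B * \<bar>y - x\<bar>"
  shows "negligible (h ` S)"
proof (rule negligible_locally_Lipschitz_image[OF _ assms(1)])
  fix x assume "x \<in> S"
  then obtain d B where "d > 0" "\<forall>y\<in>S. \<bar>y - x\<bar> < d \<longrightarrow> \<bar>h y - h x\<bar> \<le> B * \<bar>y - x\<bar>"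
    using assms(2) by blast
  then show "\<exists>U B. open U \<and> x \<in> U \<and> (\<forall>y\<in>S \<inter> U. norm (h y - h x) \<le> B * norm (y - x))"
    by (intro exI[of _ "ball x d"] exI[of _ B]) (auto simp: dist_real_def abs_minus_commute)
qed simp

lemma negligible_lipschitz_image_real:
  fixes h :: "real \<Rightarrow> real"
  assumes "negligible S" and "B-lipschitz_on S h"
  shows "negligible (h ` S)"
proof (rule negligible_image_locally_lipschitz_real[OF assms(1)])
  show "\<exists>d>0. \<exists>B. \<forall>y\<in>S. \<bar>y - x\<bar> < d \<longrightarrow> \<bar>h y - h x\<bar> \<le> B * \<bar>y - x\<bar>" if "x \<in> S" for x
    using assms(2) that by (intro exI[of _ 1] exI[of _ B]) (auto simp: lipschitz_on_def dist_real_def)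
qed

lemma negligible_image_derivative_zero_real:
  fixes h :: "real \<Rightarrow> real"
  assumes "\<And>x. x \<in> S \<Longrightarrow> (h has_real_derivative 0) (at x within S)"
  shows "negligible (h ` S)"
proof -
  \<comment> \<open>baby_Sard is stated for real^'n, so h is transported along vec.\<close>
  let ?H = "\<lambda>x::real^1. (vec (h (x$1)) :: real^1)"
  have norm_vec1: "norm (z::real^1) = \<bar>z$1\<bar>" for z
    by (simp add: norm_vec_def L2_set_def)
  have "(?H has_derivative (\<lambda>_. 0)) (at x within vec ` S)" if "x \<in> vec ` S" for x
    unfolding has_derivative_within_alt
  proof (intro conjI allI impI)
    fix e :: real assume "e > 0"
    from that obtain x0 where x0: "x0 \<in> S" "x = vec x0" by auto
    from assms[OF x0(1)] \<open>e > 0\<close> obtain d where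
      "d > 0" "\<forall>y\<in>S. \<bar>y - x0\<bar> < d \<longrightarrow> \<bar>h y - h x0\<bar> \<le> e * \<bar>y - x0\<bar>"
      unfolding has_field_derivative_def has_derivative_within_alt by (auto simp: real_norm_def)
    then show "\<exists>d>0. \<forall>y\<in>vec ` S. norm (y - x) < d \<longrightarrow> norm (?H y - ?H x - 0) \<le> e * norm (y - x)"
      using x0 by (auto simp: norm_vec1)
  qed simp
  then have "negligible (?H ` vec ` S)"
  proof (rule baby_Sard[rotated])
    have "matrix (\<lambda>_::real^1. 0::real^1) = 0" by (simp add: matrix_def vec_eq_iff)
    then show "rank (matrix (\<lambda>_::real^1. 0::real^1)) < CARD(1)" by simp
  qed auto
  moreover have "?H ` vec ` S = vec ` h ` S" by (auto simp: image_image)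
  ultimately have "negligible (vec ` h ` S :: (real^1) set)" by simp
  then have "negligible ((\<lambda>x::real^1. x$1) ` vec ` h ` S)"
    by (rule negligible_differentiable_image_negligible[rotated])
       (simp_all add: bounded_linear_imp_differentiable_on bounded_linear_vec_nth)
  then show ?thesis by (simp add: image_image)
qed

lemma lipschitz_derivative_zero_ae_imp_eq:
  fixes \<phi> :: "real \<Rightarrow> real"
  assumes lip: "C-lipschitz_on {p..q} \<phi>" and "p \<le> q" and N: "negligible N"
    and der: "\<And>s. s \<in> {p<..<q} - N \<Longrightarrow> (\<phi> has_real_derivative 0) (at s within {p..q})"
  shows "\<phi> p = \<phi> q"
proof -
  have "negligible (\<phi> ` ({p<..<q} - N))"
    by (rule negligible_image_derivative_zero_real, rule DERIV_subset[OF der]) auto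
  moreover have "negligible (\<phi> ` (N \<inter> {p<..<q}))"
    by (rule negligible_lipschitz_image_real[OF negligible_subset[OF N]])
       (auto intro: lipschitz_on_subset[OF lip])
  moreover have "{p..q} \<subseteq> ({p<..<q} - N) \<union> (N \<inter> {p<..<q}) \<union> {p, q}"
    by auto
  then have "\<phi> ` {p..q} \<subseteq> \<phi> ` ({p<..<q} - N) \<union> \<phi> ` (N \<inter> {p<..<q}) \<union> {\<phi> p, \<phi> q}"
    by blast
  ultimately have negl: "negligible (\<phi> ` {p..q})"
    by (meson negligible_Un negligible_insert negligible_empty negligible_subset)
  have "connected (\<phi> ` {p..q})"
    by (intro connected_continuous_image lipschitz_on_continuous_on[OF lip]) simp
  then have "{min (\<phi> p) (\<phi> q)..max (\<phi> p) (\<phi> q)} \<subseteq> \<phi> ` {p..q}"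
    by (rule connected_contains_Icc) (use \<open>p \<le> q\<close> in \<open>auto simp: min_def max_def\<close>)
  then have "negligible {min (\<phi> p) (\<phi> q)..max (\<phi> p) (\<phi> q)}"
    using negl negligible_subset by blast
  then have "max (\<phi> p) (\<phi> q) \<le> min (\<phi> p) (\<phi> q)"
    using negligible_interval(1)[of "min (\<phi> p) (\<phi> q)" "max (\<phi> p) (\<phi> q)"] by simp
  then show ?thesis by linarith
qed

lemma measure_image_derivative_one:
  fixes \<sigma> :: "real \<Rightarrow> real"
  assumes S: "S \<in> lmeasurable"
    and der: "\<And>t. t \<in> S \<Longrightarrow> (\<sigma> has_real_derivative 1) (at t within S)"
    and inj: "inj_on \<sigma> S"
  shows "\<sigma> ` S \<in> lmeasurable" and "measure lebesgue (\<sigma> ` S) = measure lebesgue S"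
proof -
  have "(\<lambda>_. 1::real) absolutely_integrable_on S"
    using S lmeasurable_iff_integrable_on absolutely_integrable_on_iff_nonneg by fastforce
  moreover have "integral S (\<lambda>_. 1::real) = measure lebesgue S"
    using lmeasure_integral[OF S] by simp
  ultimately have "(\<lambda>_. 1::real) absolutely_integrable_on \<sigma> ` S \<and>
      integral (\<sigma> ` S) (\<lambda>_. 1::real) = measure lebesgue S"
    using has_absolute_integral_change_of_variables_real[OF fmeasurableD[OF S] der inj,
        of "\<lambda>_. 1" "measure lebesgue S"] by simp
  then show "\<sigma> ` S \<in> lmeasurable" "measure lebesgue (\<sigma> ` S) = measure lebesgue S"
    using lmeasurable_iff_integrable_on lmeasure_integral set_lebesgue_integral_eq_integral(1) by metis+
qed

lemma negligible_if_locally_expanding: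
  fixes h :: "real \<Rightarrow> real"
  assumes negl: "negligible (h ` S)"
    and expand: "\<And>t. t \<in> S \<Longrightarrow> \<exists>d>0. \<exists>K. \<forall>y\<in>S. \<bar>y - t\<bar> < d \<longrightarrow> \<bar>y - t\<bar> \<le> K * \<bar>h y - h t\<bar>"
  shows "negligible S"
proof -
  \<comment> \<open>The pieces P n m have width below 1/(n+1), so h is injective on each with an (n+1)-Lipschitz
    inverse.\<close>
  define P where "P n m = {t\<in>S. (\<forall>y\<in>S. \<bar>y - t\<bar> < 1 / real (Suc n) \<longrightarrow> \<bar>y - t\<bar> \<le> real (Suc n) * \<bar>h y - h t\<bar>)
      \<and> of_int m \<le> t * real (Suc n) \<and> t * real (Suc n) < of_int m + 1}" for n :: nat and m :: int
  have "S \<subseteq> (\<Union>(n, m) \<in> UNIV. P n m)"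
  proof
    fix t assume t: "t \<in> S"
    obtain d K where dK: "d > 0" "\<forall>y\<in>S. \<bar>y - t\<bar> < d \<longrightarrow> \<bar>y - t\<bar> \<le> K * \<bar>h y - h t\<bar>"
      using expand[OF t] by blast
    obtain n :: nat where n: "max K (1 / d) \<le> n" using real_arch_simple by blast
    have "\<forall>y\<in>S. \<bar>y - t\<bar> < 1 / real (Suc n) \<longrightarrow> \<bar>y - t\<bar> \<le> real (Suc n) * \<bar>h y - h t\<bar>"
    proof (intro ballI impI)
      fix y assume "y \<in> S" "\<bar>y - t\<bar> < 1 / real (Suc n)"
      moreover have "1 / real (Suc n) < d" using n dK(1) by (simp add: field_simps)
      ultimately have "\<bar>y - t\<bar> \<le> K * \<bar>h y - h t\<bar>" using dK(2) by simp
      also have "\<dots> \<le> real (Suc n) * \<bar>h y - h t\<bar>" using n by (intro mult_right_mono) auto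
      finally show "\<bar>y - t\<bar> \<le> real (Suc n) * \<bar>h y - h t\<bar>" .
    qed
    moreover have "of_int \<lfloor>t * Suc n\<rfloor> \<le> t * Suc n" "t * Suc n < of_int \<lfloor>t * Suc n\<rfloor> + 1"
      by linarith+
    ultimately have "t \<in> P n \<lfloor>t * Suc n\<rfloor>"
      using t by (simp add: P_def)
    then show "t \<in> (\<Union>(n, m) \<in> UNIV. P n m)" by blast
  qed
  moreover have "negligible (P n m)" for n m
  proof -
    have close: "\<bar>t' - t\<bar> \<le> Suc n * \<bar>h t' - h t\<bar>" if "t \<in> P n m" "t' \<in> P n m" for t t'
    proof -
      have "\<bar>t' * Suc n - t * Suc n\<bar> < 1" using that by (auto simp: P_def)
      then have "\<bar>t' - t\<bar> * Suc n < 1"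
        by (simp add: abs_mult flip: left_diff_distrib)
      then have "\<bar>t' - t\<bar> < 1 / Suc n"
        by (simp add: field_simps)
      then show ?thesis using that by (auto simp: P_def)
    qed
    then have inj: "inj_on h (P n m)" by (fastforce intro: inj_onI)
    have "(real (Suc n))-lipschitz_on (h ` P n m) (inv_into (P n m) h)"
      using close inj by (auto simp: lipschitz_on_def dist_real_def)
    then have "negligible (inv_into (P n m) h ` h ` P n m)"
      by (rule negligible_lipschitz_image_real[rotated])
         (rule negligible_subset[OF negl], auto simp: P_def)
    then show ?thesis using inj by simp
  qed
  then have "negligible (\<Union>(n, m) \<in> UNIV. P n m)"
    by (intro negligible_countable_Union) auto
  ultimately show ?thesis by (rule negligible_subset[rotated])
qed

lemma has_vector_derivative_within_approx:
  assumes "(f has_vector_derivative v) (at t within S)" and "e > 0"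
  obtains d where "d > 0"
    and "\<And>y. y \<in> S \<Longrightarrow> \<bar>y - t\<bar> < d \<Longrightarrow> norm (f y - f t - (y - t) *\<^sub>R v) \<le> e * \<bar>y - t\<bar>"
  using assms unfolding has_vector_derivative_def has_derivative_within_alt
  by (auto simp: real_norm_def)

lemma has_vector_derivative_nonzero_expands:
  fixes f :: "real \<Rightarrow> 'a::real_normed_vector"
  assumes der: "(f has_vector_derivative v) (at t within S)" and "v \<noteq> 0"
  obtains d where "d > 0"
    and "\<And>y. y \<in> S \<Longrightarrow> \<bar>y - t\<bar> < d \<Longrightarrow> \<bar>y - t\<bar> * norm v \<le> 2 * norm (f y - f t)"
proof -
  obtain d where d: "d > 0"
    "\<And>y. y \<in> S \<Longrightarrow> \<bar>y - t\<bar> < d \<Longrightarrow> norm (f y - f t - (y - t) *\<^sub>R v) \<le> norm v / 2 * \<bar>y - t\<bar>"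
    using has_vector_derivative_within_approx[OF der, of "norm v / 2"] \<open>v \<noteq> 0\<close> by auto
  have "\<bar>y - t\<bar> * norm v \<le> 2 * norm (f y - f t)" if "y \<in> S" "\<bar>y - t\<bar> < d" for y
  proof -
    have "norm ((y - t) *\<^sub>R v) \<le> norm (f y - f t) + norm (f y - f t - (y - t) *\<^sub>R v)"
      by (metis norm_minus_commute norm_triangle_sub)
    moreover have "norm ((y - t) *\<^sub>R v) = \<bar>y - t\<bar> * norm v"
      and "norm v / 2 * \<bar>y - t\<bar> = \<bar>y - t\<bar> * norm v / 2" by simp_all
    ultimately show ?thesis using d(2)[OF that] by linarith
  qed
  with d(1) show thesis by (rule that)
qed

lemma int_lattice_diff: "x \<in> int_lattice \<Longrightarrow> y \<in> int_lattice \<Longrightarrow> x - y \<in> int_lattice"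
  by (auto simp: int_lattice_def)

lemma zero_in_int_lattice: "0 \<in> int_lattice"
  by (auto simp: int_lattice_def)

lemma closed_int_lattice: "closed int_lattice"
proof -
  have "int_lattice = (\<Inter>i. (\<lambda>x::real^2. x $ i) -` \<int>)" by (auto simp: int_lattice_def)
  moreover have "closed ((\<lambda>x::real^2. x $ i) -` \<int>)" for i
    by (rule continuous_closed_vimage) (auto intro: continuous_intros)
  ultimately show ?thesis by (metis closed_INT)
qed

lemma continuous_int_lattice_valued_constant:
  assumes "connected S" and "continuous_on S k" and "k ` S \<subseteq> int_lattice"
    and "x \<in> S" and "y \<in> S"
  shows "k x = k y"
proof -
  have "(\<lambda>t. k t $ i) constant_on S" for i
  proof (rule continuous_discrete_range_constant[OF \<open>connected S\<close>])
    show "continuous_on S (\<lambda>t. k t $ i)" by (intro continuous_intros assms(2))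
    show "\<exists>e>0. \<forall>y. y \<in> S \<and> k y $ i \<noteq> k x $ i \<longrightarrow> e \<le> norm (k y $ i - k x $ i)"
      if "x \<in> S" for x
    proof (intro exI[of _ 1] conjI allI impI)
      fix y assume y: "y \<in> S \<and> k y $ i \<noteq> k x $ i"
      then have "k y $ i \<in> \<int>" "k x $ i \<in> \<int>"
        using assms(3) that by (auto simp: int_lattice_def)
      with y show "1 \<le> norm (k y $ i - k x $ i)"
        by (elim Ints_cases) auto
    qed simp
  qed
  then show ?thesis using assms(4,5) unfolding constant_on_def vec_eq_iff by metis
qed

lemma lift_through_injective_curve_mod_lattice:
  fixes f g :: "real \<Rightarrow> real^2"
  assumes f: "continuous_on {0..L} f" and g: "continuous_on {0..T} g" and "0 \<le> T"
    and inj: "\<And>s s'. s \<in> {0..L} \<Longrightarrow> s' \<in> {0..L} \<Longrightarrow> f s - f s' \<in> int_lattice \<Longrightarrow> s = s'"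
    and cover: "\<And>t. t \<in> {0..T} \<Longrightarrow> \<exists>s\<in>{0..L}. g t - f s \<in> int_lattice"
  obtains \<sigma> k where "continuous_on {0..T} \<sigma>" and "\<sigma> ` {0..T} \<subseteq> {0..L}" and "k \<in> int_lattice"
    and "\<And>t. t \<in> {0..T} \<Longrightarrow> g t = f (\<sigma> t) + k"
proof -
  define \<sigma> where "\<sigma> t = (SOME s. s \<in> {0..L} \<and> g t - f s \<in> int_lattice)" for t
  have \<sigma>: "\<sigma> t \<in> {0..L} \<and> g t - f (\<sigma> t) \<in> int_lattice" if "t \<in> {0..T}" for t
    unfolding \<sigma>_def by (rule someI_ex) (use cover[OF that] in blast)
  have unique: "s = \<sigma> t" if "t \<in> {0..T}" "s \<in> {0..L}" "g t - f s \<in> int_lattice" for t s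
    using inj[OF that(2), of "\<sigma> t"] int_lattice_diff[OF \<sigma>[OF that(1), THEN conjunct2] that(3)] \<sigma>[OF that(1)]
    by simp
  let ?h = "\<lambda>z. g (fst z) - f (snd z)"
  have "(\<lambda>t. (t, \<sigma> t)) ` {0..T} = ({0..T} \<times> {0..L}) \<inter> ?h -` int_lattice"
    using \<sigma> unique by (auto intro!: image_eqI)
  moreover have "continuous_on ({0..T} \<times> {0..L}) ?h"
    by (intro continuous_on_diff continuous_on_compose2[OF g continuous_on_fst]
        continuous_on_compose2[OF f continuous_on_snd]) auto
  then have "closed (({0..T} \<times> {0..L}) \<inter> ?h -` int_lattice)"
    by (rule continuous_closed_preimage) (auto simp: closed_Times closed_int_lattice)
  ultimately have "continuous_on {0..T} \<sigma>"
    using \<sigma> by (intro continuous_from_closed_graph[of "{0..L}"]) auto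
  moreover have "\<sigma> ` {0..T} \<subseteq> {0..L}" using \<sigma> by blast
  moreover have "g t - f (\<sigma> t) = g 0 - f (\<sigma> 0)" if "t \<in> {0..T}" for t
  proof (rule continuous_int_lattice_valued_constant[of "{0..T}"])
    show "continuous_on {0..T} (\<lambda>t. g t - f (\<sigma> t))"
      by (intro continuous_on_diff g continuous_on_compose2[OF f \<open>continuous_on {0..T} \<sigma>\<close>])
         (use \<sigma> in auto)
  qed (use \<sigma> that \<open>0 \<le> T\<close> in auto)
  moreover have "g 0 - f (\<sigma> 0) \<in> int_lattice" using \<sigma> \<open>0 \<le> T\<close> by simp
  ultimately show thesis
    by (intro that[of \<sigma> "g 0 - f (\<sigma> 0)"]) (auto simp: algebra_simps)
qed

lemma continuous_on_preimage_borel: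
  assumes "continuous_on A h" and "A \<in> sets borel" and "B \<in> sets borel"
  shows "{t\<in>A. h t \<in> B} \<in> sets borel"
proof -
  have "h -` B \<inter> space (restrict_space borel A) \<in> sets (restrict_space borel A)"
    by (rule measurable_sets[OF borel_measurable_continuous_on_restrict[OF assms(1)] assms(3)])
  then have "h -` B \<inter> A \<in> sets borel"
    using assms(2) by (simp add: sets_restrict_space_iff)
  moreover have "{t\<in>A. h t \<in> B} = h -` B \<inter> A" by auto
  ultimately show ?thesis by simp
qed

locale lifted_trajectories =
  fixes f g :: "real \<Rightarrow> real^2" and b :: "real^2 \<Rightarrow> real^2"
    and L T C1 C2 :: real and \<sigma> :: "real \<Rightarrow> real" and k :: "real^2" and N1 N2 :: "real set"
  assumes T_pos: "0 < T"
    and lipschitz_f: "C1-lipschitz_on {0..L} f" and lipschitz_g: "C2-lipschitz_on {0..T} g"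
    and N1: "N1 \<in> null_sets lborel" and N2: "N2 \<in> null_sets lborel"
    and ode_f: "\<And>s. s \<in> {0..L} \<Longrightarrow> s \<notin> N1 \<Longrightarrow> (f has_vector_derivative b (f s)) (at s within {0..L})"
    and ode_g: "\<And>t. t \<in> {0..T} \<Longrightarrow> t \<notin> N2 \<Longrightarrow> (g has_vector_derivative b (g t)) (at t within {0..T})"
    and inj_f: "inj_on f {0..L}"
    and \<sigma>_range: "\<sigma> ` {0..T} \<subseteq> {0..L}"
    and continuous_\<sigma>: "continuous_on {0..T} \<sigma>"
    and g_lift: "\<And>t. t \<in> {0..T} \<Longrightarrow> g t = f (\<sigma> t) + k"
    and b_periodic: "\<And>x. b (x + k) = b x"
    and b_borel: "b \<in> borel_measurable borel"
begin

lemma \<sigma>_in: "t \<in> {0..T} \<Longrightarrow> \<sigma> t \<in> {0..L}"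
  using \<sigma>_range by blast

lemma L_nonneg: "0 \<le> L"
  using \<sigma>_in[of 0] T_pos by simp

lemma g_diff: "t \<in> {0..T} \<Longrightarrow> y \<in> {0..T} \<Longrightarrow> g y - g t = f (\<sigma> y) - f (\<sigma> t)"
  by (simp add: g_lift)

lemma b_g_lift: "t \<in> {0..T} \<Longrightarrow> b (g t) = b (f (\<sigma> t))"
  by (simp add: g_lift b_periodic)

lemma negligible_N1: "negligible N1" and negligible_N2: "negligible N2"
  using N1 N2 by (auto simp: negligible_iff_null_sets intro: null_sets_completionI)

lemma \<sigma>_continuous_at:
  assumes "t \<in> {0..T}" and "e > 0"
  obtains d where "d > 0" and "\<And>y. y \<in> {0..T} \<Longrightarrow> \<bar>y - t\<bar> < d \<Longrightarrow> \<bar>\<sigma> y - \<sigma> t\<bar> < e"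
  using continuous_\<sigma> assms unfolding continuous_on_iff dist_real_def by (metis atLeastAtMost_iff)

definition moving_params :: "real set" where
  "moving_params = {s\<in>{0..L}. s \<notin> N1 \<and> b (f s) \<noteq> 0}"

definition moving_times :: "real set" where
  "moving_times = {t\<in>{0..T}. t \<notin> N2 \<and> \<sigma> t \<in> moving_params}"

lemma \<sigma>_locally_lipschitz:
  assumes t: "t \<in> {0..T}" and "\<sigma> t \<in> moving_params"
  shows "\<exists>d>0. \<exists>B. \<forall>y\<in>{0..T}. \<bar>y - t\<bar> < d \<longrightarrow> \<bar>\<sigma> y - \<sigma> t\<bar> \<le> B * \<bar>y - t\<bar>"
proof -
  let ?v = "b (f (\<sigma> t))"
  have s: "\<sigma> t \<in> {0..L}" "\<sigma> t \<notin> N1" and v: "?v \<noteq> 0"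
    using assms(2) by (auto simp: moving_params_def)
  obtain d where d: "d > 0"
    "\<And>y. y \<in> {0..L} \<Longrightarrow> \<bar>y - \<sigma> t\<bar> < d \<Longrightarrow> \<bar>y - \<sigma> t\<bar> * norm ?v \<le> 2 * norm (f y - f (\<sigma> t))"
    using has_vector_derivative_nonzero_expands[OF ode_f[OF s] v] by blast
  obtain e where e: "e > 0" "\<And>y. y \<in> {0..T} \<Longrightarrow> \<bar>y - t\<bar> < e \<Longrightarrow> \<bar>\<sigma> y - \<sigma> t\<bar> < d"
    using \<sigma>_continuous_at[OF t d(1)] by blast
  have "\<bar>\<sigma> y - \<sigma> t\<bar> \<le> 2 * C2 / norm ?v * \<bar>y - t\<bar>" if y: "y \<in> {0..T}" "\<bar>y - t\<bar> < e" for y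
  proof -
    have "\<bar>\<sigma> y - \<sigma> t\<bar> * norm ?v \<le> 2 * norm (g y - g t)"
      using d(2)[OF \<sigma>_in[OF y(1)] e(2)[OF y]] g_diff[OF t y(1)] by simp
    also have "\<dots> \<le> 2 * C2 * \<bar>y - t\<bar>"
      using lipschitz_on_normD[OF lipschitz_g y(1) t] by simp
    finally show ?thesis using v by (simp add: field_simps)
  qed
  with e(1) show ?thesis by blast
qed

lemma \<sigma>_has_derivative_one:
  assumes t: "t \<in> moving_times"
  shows "(\<sigma> has_real_derivative 1) (at t within {0..T})"
  unfolding has_field_derivative_def has_derivative_within_alt
proof (intro conjI allI impI)
  show "bounded_linear ((*) (1::real))" by (rule bounded_linear_mult_right)
  fix e :: real assume "e > 0"
  let ?s = "\<sigma> t" and ?v = "b (f (\<sigma> t))"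
  have t0: "t \<in> {0..T}" "t \<notin> N2" and s: "?s \<in> {0..L}" "?s \<notin> N1" and v: "?v \<noteq> 0"
    using t by (auto simp: moving_times_def moving_params_def)
  have "?s \<in> moving_params" using t by (simp add: moving_times_def)
  then obtain d0 B where d0: "d0 > 0" "\<forall>y\<in>{0..T}. \<bar>y - t\<bar> < d0 \<longrightarrow> \<bar>\<sigma> y - ?s\<bar> \<le> B * \<bar>y - t\<bar>"
    using \<sigma>_locally_lipschitz[OF t0(1)] by blast
  define \<epsilon> where "\<epsilon> = e * norm ?v / (1 + \<bar>B\<bar>)"
  have \<epsilon>: "\<epsilon> > 0" "\<epsilon> * (1 + \<bar>B\<bar>) = e * norm ?v"
    using \<open>e > 0\<close> v by (simp_all add: \<epsilon>_def)
  obtain d1 where d1: "d1 > 0"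
    "\<And>y. y \<in> {0..T} \<Longrightarrow> \<bar>y - t\<bar> < d1 \<Longrightarrow> norm (g y - g t - (y - t) *\<^sub>R ?v) \<le> \<epsilon> * \<bar>y - t\<bar>"
    using has_vector_derivative_within_approx[OF ode_g[OF t0] \<epsilon>(1)] b_g_lift[OF t0(1)] by metis
  obtain d2 where d2: "d2 > 0"
    "\<And>y. y \<in> {0..L} \<Longrightarrow> \<bar>y - ?s\<bar> < d2 \<Longrightarrow> norm (f y - f ?s - (y - ?s) *\<^sub>R ?v) \<le> \<epsilon> * \<bar>y - ?s\<bar>"
    using has_vector_derivative_within_approx[OF ode_f[OF s] \<epsilon>(1)] by metis
  obtain d3 where d3: "d3 > 0" "\<And>y. y \<in> {0..T} \<Longrightarrow> \<bar>y - t\<bar> < d3 \<Longrightarrow> \<bar>\<sigma> y - ?s\<bar> < d2"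
    using \<sigma>_continuous_at[OF t0(1) d2(1)] by blast
  show "\<exists>d>0. \<forall>y\<in>{0..T}. norm (y - t) < d \<longrightarrow> norm (\<sigma> y - \<sigma> t - 1 * (y - t)) \<le> e * norm (y - t)"
  proof (intro exI[of _ "min d0 (min d1 d3)"] conjI ballI impI)
    show "min d0 (min d1 d3) > 0" using d0 d1 d3 by simp
    fix y assume y: "y \<in> {0..T}" "norm (y - t) < min d0 (min d1 d3)"
    define u w where "u = y - t" and "w = \<sigma> y - ?s"
    \<comment> \<open>g and f \<circ> \<sigma> differ by a constant and both have velocity ?v at t, so the
      increments u of t and w of \<sigma> agree to first order.\<close>
    have "(u - w) *\<^sub>R ?v = (f (\<sigma> y) - f ?s - w *\<^sub>R ?v) - (g y - g t - u *\<^sub>R ?v)"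
      using g_diff[OF t0(1) y(1)] by (simp add: u_def w_def algebra_simps)
    then have "\<bar>u - w\<bar> * norm ?v \<le> norm (f (\<sigma> y) - f ?s - w *\<^sub>R ?v) + norm (g y - g t - u *\<^sub>R ?v)"
      by (metis norm_scaleR norm_triangle_ineq4)
    also have "\<dots> \<le> \<epsilon> * \<bar>w\<bar> + \<epsilon> * \<bar>u\<bar>"
      using d1(2)[OF y(1)] d2(2)[OF \<sigma>_in[OF y(1)] d3(2)[OF y(1)]] y(2) by (simp add: u_def w_def)
    also have "\<dots> \<le> \<epsilon> * (1 + \<bar>B\<bar>) * \<bar>u\<bar>"
    proof -
      have "\<bar>w\<bar> \<le> B * \<bar>u\<bar>" using d0(2) y by (simp add: u_def w_def)
      also have "\<dots> \<le> \<bar>B\<bar> * \<bar>u\<bar>" by (intro mult_right_mono) auto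
      finally have "\<bar>w\<bar> \<le> \<bar>B\<bar> * \<bar>u\<bar>" .
      then show ?thesis using \<epsilon>(1) by (simp add: algebra_simps mult_left_mono)
    qed
    finally have "\<bar>u - w\<bar> \<le> e * \<bar>u\<bar>" using v by (simp add: \<epsilon>(2) mult.assoc mult.left_commute)
    then show "norm (\<sigma> y - \<sigma> t - 1 * (y - t)) \<le> e * norm (y - t)"
      by (simp add: u_def w_def abs_minus_commute)
  qed
qed

lemma negligible_\<sigma>_image_null_times:
  "negligible (\<sigma> ` {t\<in>{0..T}. t \<in> N2 \<and> \<sigma> t \<in> moving_params})"
proof (rule negligible_image_locally_lipschitz_real)
  show "negligible {t\<in>{0..T}. t \<in> N2 \<and> \<sigma> t \<in> moving_params}"
    by (rule negligible_subset[OF negligible_N2]) auto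
  fix t assume "t \<in> {t\<in>{0..T}. t \<in> N2 \<and> \<sigma> t \<in> moving_params}"
  then obtain d B where "d > 0" "\<forall>y\<in>{0..T}. \<bar>y - t\<bar> < d \<longrightarrow> \<bar>\<sigma> y - \<sigma> t\<bar> \<le> B * \<bar>y - t\<bar>"
    using \<sigma>_locally_lipschitz by blast
  then show "\<exists>d>0. \<exists>B. \<forall>y\<in>{t\<in>{0..T}. t \<in> N2 \<and> \<sigma> t \<in> moving_params}.
      \<bar>y - t\<bar> < d \<longrightarrow> \<bar>\<sigma> y - \<sigma> t\<bar> \<le> B * \<bar>y - t\<bar>"
    by blast
qed

lemma moving_params_not_negligible:
  assumes pq: "p \<in> {0..L}" "q \<in> {0..L}" "p < q"
  shows "\<not> negligible (moving_params \<inter> {p<..<q})"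
proof
  assume negl: "negligible (moving_params \<inter> {p<..<q})"
  have "f p $ i = f q $ i" for i
  proof (rule lipschitz_derivative_zero_ae_imp_eq[where \<phi> = "\<lambda>s. f s $ i" and C = C1 and N = "N1 \<union> moving_params \<inter> {p<..<q}"])
    have "dist (f x $ i) (f y $ i) \<le> C1 * dist x y" if "x \<in> {p..q}" "y \<in> {p..q}" for x y
    proof -
      have "norm (f x - f y) \<le> C1 * norm (x - y)"
        using pq that by (intro lipschitz_on_normD[OF lipschitz_f]) auto
      moreover have "\<bar>(f x - f y) $ i\<bar> \<le> norm (f x - f y)" by (rule component_le_norm_cart)
      ultimately show ?thesis by (simp add: dist_real_def)
    qed
    then show "C1-lipschitz_on {p..q} (\<lambda>s. f s $ i)"
      by (intro lipschitz_onI lipschitz_on_nonneg[OF lipschitz_f])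
    show "p \<le> q" using pq by simp
    show "negligible (N1 \<union> moving_params \<inter> {p<..<q})" using negligible_N1 negl by simp
    fix s assume s: "s \<in> {p<..<q} - (N1 \<union> moving_params \<inter> {p<..<q})"
    then have s0: "s \<in> {0..L}" "s \<notin> N1" and "b (f s) = 0"
      using pq by (auto simp: moving_params_def)
    with ode_f[OF s0] have "(f has_vector_derivative 0) (at s within {0..L})" by simp
    then have "(f has_vector_derivative 0) (at s within {p..q})"
      by (rule has_vector_derivative_within_subset) (use pq in auto)
    from bounded_linear.has_vector_derivative[OF bounded_linear_vec_nth this, of i]
    show "((\<lambda>s. f s $ i) has_real_derivative 0) (at s within {p..q})"
      by (simp add: has_real_derivative_iff_has_vector_derivative)
  qed
  then have "f p = f q" by (simp add: vec_eq_iff)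
  with inj_onD[OF inj_f] pq show False by fastforce
qed

lemma \<sigma>_increases_right:
  assumes t: "t \<in> moving_times" and "t < c" and "c \<le> T"
  obtains z where "t < z" and "z \<le> c" and "\<sigma> t < \<sigma> z"
proof -
  obtain d where d: "d > 0" "\<And>h. h > 0 \<Longrightarrow> t + h \<in> {0..T} \<Longrightarrow> h < d \<Longrightarrow> \<sigma> t < \<sigma> (t + h)"
    using has_real_derivative_pos_inc_right[OF \<sigma>_has_derivative_one[OF t]] by auto
  define h where "h = min (d / 2) (c - t)"
  have "h > 0" "h < d" "t + h \<le> c" using d(1) \<open>t < c\<close> by (auto simp: h_def min_def)
  moreover have "t + h \<in> {0..T}" using t \<open>h > 0\<close> \<open>t + h \<le> c\<close> \<open>c \<le> T\<close> by (auto simp: moving_times_def)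
  ultimately show thesis using d(2) that[of "t + h"] by simp
qed

lemma last_passage_in_null_times:
  assumes ac: "a \<in> {0..T}" "c \<in> {0..T}" "a \<le> c"
    and y: "y \<in> moving_params" "\<sigma> c < y" "y < \<sigma> a"
  shows "y \<in> \<sigma> ` {t\<in>{0..T}. t \<in> N2 \<and> \<sigma> t \<in> moving_params}"
proof -
  have cont: "continuous_on {a..c} \<sigma>" by (rule continuous_on_subset[OF continuous_\<sigma>]) (use ac in auto)
  let ?K = "{t\<in>{a..c}. \<sigma> t = y}"
  have "?K \<noteq> {}" using IVT2'[of \<sigma> c y a] y cont ac by auto
  moreover have K_bdd: "bdd_above ?K" by (rule bdd_aboveI[of _ c]) auto
  moreover have "closed ?K"
    by (rule continuous_closed_preimage_constant[OF cont closed_atLeastAtMost])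
  ultimately have tK: "Sup ?K \<in> ?K" by (rule closed_contains_Sup)
  define t where "t = Sup ?K"
  have t: "t \<in> {a..c}" "\<sigma> t = y" "t \<in> {0..T}" using tK ac by (auto simp: t_def)
  have "t \<in> N2"
  proof (rule ccontr)
    assume "t \<notin> N2"
    then have "t \<in> moving_times" using t y by (simp add: moving_times_def)
    moreover have "t < c" using t y by (cases "t = c") auto
    ultimately obtain z where z: "t < z" "z \<le> c" "y < \<sigma> z"
      using \<sigma>_increases_right ac t(2) by (metis atLeastAtMost_iff)
    have "continuous_on {z..c} \<sigma>" by (rule continuous_on_subset[OF cont]) (use z t in auto)
    then obtain x where x: "z \<le> x" "x \<le> c" "\<sigma> x = y"
      using IVT2'[of \<sigma> c y z] y z by auto
    then have "x \<in> ?K" using z t by auto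
    then have "x \<le> t" unfolding t_def by (rule cSup_upper[OF _ K_bdd])
    then show False using x z by simp
  qed
  then show ?thesis using t y by (intro image_eqI[of _ _ t]) auto
qed

lemma \<sigma>_mono:
  assumes "a \<in> {0..T}" "c \<in> {0..T}" "a \<le> c"
  shows "\<sigma> a \<le> \<sigma> c"
proof (rule ccontr)
  assume "\<not> \<sigma> a \<le> \<sigma> c"
  \<comment> \<open>Otherwise the curve f would be stationary almost everywhere on [\<sigma> c, \<sigma> a], contradicting
    its injectivity.\<close>
  have "moving_params \<inter> {\<sigma> c<..<\<sigma> a} \<subseteq> \<sigma> ` {t\<in>{0..T}. t \<in> N2 \<and> \<sigma> t \<in> moving_params}"
    using last_passage_in_null_times[OF assms] by auto
  then have "negligible (moving_params \<inter> {\<sigma> c<..<\<sigma> a})"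
    by (rule negligible_subset[OF negligible_\<sigma>_image_null_times])
  moreover have "\<sigma> c \<in> {0..L}" "\<sigma> a \<in> {0..L}" using \<sigma>_in assms by auto
  ultimately show False using moving_params_not_negligible \<open>\<not> \<sigma> a \<le> \<sigma> c\<close> by simp
qed

lemma inj_on_\<sigma>_moving_times: "inj_on \<sigma> moving_times"
proof -
  have "\<sigma> t < \<sigma> t'" if tt: "t \<in> moving_times" "t' \<in> moving_times" "t < t'" for t t'
  proof -
    have t': "t' \<in> {0..T}" using tt by (simp add: moving_times_def)
    obtain z where z: "t < z" "z \<le> t'" "\<sigma> t < \<sigma> z"
      using \<sigma>_increases_right[OF tt(1,3)] t' by auto
    have "z \<in> {0..T}" using z t' tt(1) by (auto simp: moving_times_def)
    with \<sigma>_mono[OF _ t' z(2)] z(3) show ?thesis by simp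
  qed
  then show ?thesis by (metis inj_onI less_irrefl linorder_neq_iff)
qed

lemma nonzero_b_borel: "{x. b x \<noteq> 0} \<in> sets borel"
  using measurable_sets[OF b_borel, of "- {0}"] by (simp add: borel_open vimage_def Compl_eq)

lemma moving_times_lmeasurable: "moving_times \<in> lmeasurable"
proof -
  have N1_borel: "N1 \<in> sets borel" and N2_borel: "N2 \<in> sets borel"
    using N1 N2 by (auto dest: null_setsD2)
  have "{s\<in>{0..L}. f s \<in> {x. b x \<noteq> 0}} \<in> sets borel"
    by (intro continuous_on_preimage_borel lipschitz_on_continuous_on[OF lipschitz_f] nonzero_b_borel) simp
  moreover have "moving_params = {s\<in>{0..L}. f s \<in> {x. b x \<noteq> 0}} - N1"
    by (auto simp: moving_params_def)
  ultimately have "moving_params \<in> sets borel" using N1_borel by simp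
  then have "{t\<in>{0..T}. \<sigma> t \<in> moving_params} \<in> sets borel"
    by (intro continuous_on_preimage_borel continuous_\<sigma>) simp
  moreover have "moving_times = {t\<in>{0..T}. \<sigma> t \<in> moving_params} - N2"
    by (auto simp: moving_times_def)
  ultimately have "moving_times \<in> sets borel" using N2_borel by simp
  then show ?thesis
    by (intro bounded_set_imp_lmeasurable) (auto simp: moving_times_def intro: bounded_subset[of "{0..T}"])
qed

lemma measure_moving_times_le: "measure lebesgue moving_times \<le> L"
proof -
  have der: "(\<sigma> has_real_derivative 1) (at t within moving_times)" if "t \<in> moving_times" for t
    by (rule DERIV_subset[OF \<sigma>_has_derivative_one[OF that]]) (auto simp: moving_times_def)
  note image = measure_image_derivative_one[OF moving_times_lmeasurable der inj_on_\<sigma>_moving_times]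
  have "measure lebesgue moving_times = measure lebesgue (\<sigma> ` moving_times)" using image(2) by simp
  also have "\<dots> \<le> measure lebesgue {0..L}"
    using \<sigma>_range image(1) by (intro measure_mono_fmeasurable) (auto simp: moving_times_def fmeasurableD)
  also have "\<dots> = L" using L_nonneg by simp
  finally show ?thesis .
qed

definition exceptional_times :: "real set" where
  "exceptional_times = {t\<in>{0..T}. t \<notin> N2 \<and> b (g t) \<noteq> 0 \<and> \<sigma> t \<in> N1}"

lemma negligible_exceptional_times: "negligible exceptional_times"
proof (rule negligible_if_locally_expanding[where h = \<sigma>])
  show "negligible (\<sigma> ` exceptional_times)"
    by (rule negligible_subset[OF negligible_N1]) (auto simp: exceptional_times_def)
  fix t assume "t \<in> exceptional_times"
  then have t: "t \<in> {0..T}" "t \<notin> N2" and v: "b (g t) \<noteq> 0" by (auto simp: exceptional_times_def)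
  obtain d where d: "d > 0"
    "\<And>y. y \<in> {0..T} \<Longrightarrow> \<bar>y - t\<bar> < d \<Longrightarrow> \<bar>y - t\<bar> * norm (b (g t)) \<le> 2 * norm (g y - g t)"
    using has_vector_derivative_nonzero_expands[OF ode_g[OF t] v] by blast
  have "\<bar>y - t\<bar> \<le> 2 * C1 / norm (b (g t)) * \<bar>\<sigma> y - \<sigma> t\<bar>" if y: "y \<in> exceptional_times" "\<bar>y - t\<bar> < d" for y
  proof -
    have y0: "y \<in> {0..T}" using y by (simp add: exceptional_times_def)
    have "\<bar>y - t\<bar> * norm (b (g t)) \<le> 2 * norm (f (\<sigma> y) - f (\<sigma> t))"
      using d(2)[OF y0 y(2)] g_diff[OF t(1) y0] by simp
    also have "\<dots> \<le> 2 * C1 * \<bar>\<sigma> y - \<sigma> t\<bar>"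
      using lipschitz_on_normD[OF lipschitz_f \<sigma>_in[OF y0] \<sigma>_in[OF t(1)]] by simp
    finally show ?thesis using v by (simp add: field_simps)
  qed
  with d(1) show "\<exists>d>0. \<exists>K. \<forall>y\<in>exceptional_times. \<bar>y - t\<bar> < d \<longrightarrow> \<bar>y - t\<bar> \<le> K * \<bar>\<sigma> y - \<sigma> t\<bar>"
    by blast
qed

lemma measure_stationary_times_ge:
  "T - L \<le> measure lebesgue {t\<in>{0..T}. (g has_vector_derivative 0) (at t within {0..T})}"
proof -
  define S where "S = {t\<in>{0..T}. (g has_vector_derivative 0) (at t within {0..T})}"
  define R where "R = {t\<in>{0..T}. t \<notin> N2 \<and> b (g t) = 0}"
  define Z where "Z = exceptional_times \<union> N2 \<inter> {0..T}"
  have "R \<subseteq> S"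
  proof
    fix t assume "t \<in> R"
    then have t: "t \<in> {0..T}" "t \<notin> N2" and "b (g t) = 0" by (auto simp: R_def)
    with ode_g[OF t] show "t \<in> S" by (simp add: S_def)
  qed
  have "S - R \<subseteq> N2"
  proof
    fix t assume t: "t \<in> S - R"
    show "t \<in> N2"
    proof (rule ccontr)
      assume "t \<notin> N2"
      have t0: "t \<in> {0..T}" and "(g has_vector_derivative 0) (at t within {0..T})"
        using t by (auto simp: S_def)
      with ode_g[OF t0 \<open>t \<notin> N2\<close>] T_pos have "b (g t) = 0"
        using vector_derivative_unique_within_closed_interval[of 0 T t g] by simp
      with t \<open>t \<notin> N2\<close> show False by (auto simp: R_def S_def)
    qed
  qed
  have N2_borel: "N2 \<in> sets borel" using N2 by (auto dest: null_setsD2)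
  have "{t\<in>{0..T}. g t \<in> - {x. b x \<noteq> 0}} \<in> sets borel"
    by (intro continuous_on_preimage_borel lipschitz_on_continuous_on[OF lipschitz_g] borel_comp nonzero_b_borel) simp
  moreover have "R = {t\<in>{0..T}. g t \<in> - {x. b x \<noteq> 0}} - N2" by (auto simp: R_def)
  ultimately have R_sets: "R \<in> sets lebesgue" using N2_borel by simp
  have "negligible (S - R)" by (rule negligible_subset[OF negligible_N2 \<open>S - R \<subseteq> N2\<close>])
  moreover have "S = R \<union> (S - R)" using \<open>R \<subseteq> S\<close> by blast
  ultimately have "S \<in> sets lebesgue" using R_sets negligible_imp_sets by (metis sets.Un)
  then have S_lmeas: "S \<in> lmeasurable"
    by (intro bounded_set_imp_lmeasurable) (auto simp: S_def intro: bounded_subset[of "{0..T}"])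
  have "negligible Z" unfolding Z_def
    using negligible_exceptional_times negligible_subset[OF negligible_N2] by simp
  then have Z_sets: "Z \<in> sets lebesgue" and "measure lebesgue Z = 0"
    by (simp_all add: negligible_imp_sets negligible_imp_measure0)
  have M_sets: "moving_times \<in> sets lebesgue" using moving_times_lmeasurable by (simp add: fmeasurableD)
  have "{0..T} \<subseteq> R \<union> moving_times \<union> Z"
  proof
    fix t assume t: "t \<in> {0..T}"
    show "t \<in> R \<union> moving_times \<union> Z"
    proof (cases "t \<in> N2 \<or> b (g t) = 0")
      case True
      then show ?thesis using t by (auto simp: R_def Z_def)
    next
      case False
      then have "b (f (\<sigma> t)) \<noteq> 0" using b_g_lift[OF t] by simp
      with False t \<sigma>_in[OF t] show ?thesis
        by (auto simp: moving_times_def moving_params_def Z_def exceptional_times_def)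
    qed
  qed
  moreover have "R \<union> moving_times \<union> Z \<in> lmeasurable"
  proof (rule bounded_set_imp_lmeasurable)
    show "bounded (R \<union> moving_times \<union> Z)"
      by (rule bounded_subset[of "{0..T}"]) (auto simp: R_def moving_times_def Z_def exceptional_times_def)
  qed (use R_sets M_sets Z_sets in simp)
  ultimately have "measure lebesgue {0..T} \<le> measure lebesgue (R \<union> moving_times \<union> Z)"
    by (intro measure_mono_fmeasurable) auto
  then have "T \<le> measure lebesgue (R \<union> moving_times \<union> Z)" using T_pos by simp
  also have "\<dots> \<le> measure lebesgue R + measure lebesgue moving_times + measure lebesgue Z"
    using R_sets M_sets Z_sets measure_Un_le[of R lebesgue moving_times] measure_Un_le[of "R \<union> moving_times" lebesgue Z]
    by simp
  also have "\<dots> \<le> measure lebesgue S + L"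
    using measure_mono_fmeasurable[OF \<open>R \<subseteq> S\<close> R_sets S_lmeas] measure_moving_times_le \<open>measure lebesgue Z = 0\<close>
    by simp
  finally show ?thesis by (simp add: S_def)
qed

end

theorem mainTheorem11:
  fixes b :: "real^2 \<Rightarrow> real^2" and T :: real
    and \<gamma>1 \<gamma>2 :: "real \<Rightarrow> real^2"
  assumes b_per: "torus_periodic b"
    and b_bdd: "bounded (range b)"
    and b_borel: "b \<in> borel_measurable borel"
    and T_pos: "T > 0"
    and lip1: "\<exists>C. C-lipschitz_on {0..T/2} \<gamma>1"
    and lip2: "\<exists>C. C-lipschitz_on {0..T} \<gamma>2"
    and ode1: "AE t in lborel. t \<in> {0..T/2} \<longrightarrow>
                 (\<gamma>1 has_vector_derivative b (\<gamma>1 t)) (at t within {0..T/2})"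
    and ode2: "AE t in lborel. t \<in> {0..T} \<longrightarrow>
                 (\<gamma>2 has_vector_derivative b (\<gamma>2 t)) (at t within {0..T})"
    and inj1: "\<forall>s\<in>{0..T/2}. \<forall>t\<in>{0..T/2}. \<gamma>1 s - \<gamma>1 t \<in> int_lattice \<longrightarrow> s = t"
    and incl: "\<forall>t\<in>{0..T}. \<exists>s\<in>{0..T/2}. \<gamma>2 t - \<gamma>1 s \<in> int_lattice"
  shows "measure lebesgue {t\<in>{0..T}. (\<gamma>2 has_vector_derivative 0) (at t within {0..T})} \<ge> T / 2"
proof -
  obtain C1 C2 where C1: "C1-lipschitz_on {0..T/2} \<gamma>1" and C2: "C2-lipschitz_on {0..T} \<gamma>2"
    using lip1 lip2 by blast
  obtain N1 where N1: "N1 \<in> null_sets lborel" and ode1':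
    "\<And>s. s \<in> space lborel - N1 \<Longrightarrow> s \<in> {0..T/2} \<longrightarrow> (\<gamma>1 has_vector_derivative b (\<gamma>1 s)) (at s within {0..T/2})"
    using AE_E3[OF ode1] by blast
  obtain N2 where N2: "N2 \<in> null_sets lborel" and ode2':
    "\<And>t. t \<in> space lborel - N2 \<Longrightarrow> t \<in> {0..T} \<longrightarrow> (\<gamma>2 has_vector_derivative b (\<gamma>2 t)) (at t within {0..T})"
    using AE_E3[OF ode2] by blast
  have inj: "\<And>s s'. s \<in> {0..T/2} \<Longrightarrow> s' \<in> {0..T/2} \<Longrightarrow> \<gamma>1 s - \<gamma>1 s' \<in> int_lattice \<Longrightarrow> s = s'"
    and cover: "\<And>t. t \<in> {0..T} \<Longrightarrow> \<exists>s\<in>{0..T/2}. \<gamma>2 t - \<gamma>1 s \<in> int_lattice"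
    using inj1 incl by blast+
  obtain \<sigma> k where \<sigma>: "continuous_on {0..T} \<sigma>" "\<sigma> ` {0..T} \<subseteq> {0..T/2}" and "k \<in> int_lattice"
    and lift: "\<And>t. t \<in> {0..T} \<Longrightarrow> \<gamma>2 t = \<gamma>1 (\<sigma> t) + k"
    using lift_through_injective_curve_mod_lattice[OF lipschitz_on_continuous_on[OF C1]
        lipschitz_on_continuous_on[OF C2] _ inj cover] T_pos by auto
  interpret lifted_trajectories \<gamma>1 \<gamma>2 b "T/2" T C1 C2 \<sigma> k N1 N2
  proof
    show "inj_on \<gamma>1 {0..T/2}"
      using inj zero_in_int_lattice by (auto intro: inj_onI)
    show "b (x + k) = b x" for x
      using b_per \<open>k \<in> int_lattice\<close> by (simp add: torus_periodic_def)
  qed (use T_pos C1 C2 N1 N2 ode1' ode2' \<sigma> lift b_borel in simp_all)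
  show ?thesis using measure_stationary_times_ge by simp
qed

end
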